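(* For any $\delta>0$ there exists a fair allocation instance with additive valuations and positive entitlements summing to $1$ in which some agent $a_i$ satisfies $\frac{\mathsf{APS}_i}{\mathsf{WMMS}_i}<\delta$.
   Context: A fair allocation instance consists of agents $a_1,\dots,a_n$, a finite set $M$ of $m$ indivisible goods, valuations $v_i:2^M\to\mathbb{R}_{\ge0}$, and entitlements $b_1,\dots,b_n>0$. A valuation is additive if $v(S)=\sum_{g\in S}v(\{g\})$. Let $\Pi_n$ be the set of partitions $(S_1,\dots,S_n)$ of $M$ into $n$ bundles. The weighted maximin share is $\mathsf{WMMS}_i=\max_{S\in\Pi_n}\min_{j\in[n]}v_i(S_j)\frac{b_i}{b_j}$. With $\mathcal{P}=\{p\in\mathbb{R}^m_{\ge0}:\sum_g p_g=1\}$ and $p(S)=\sum_{g\in S}p_g$, the AnyPrice share is $\mathsf{APS}_i=\min_{p\in\mathcal{P}}\max_{S\subseteq M,\ p(S)\le b_i}v_i(S)$. *)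

theory Defs
  imports Complex_Main
begin

definition additive_on :: "nat set \<Rightarrow> (nat set \<Rightarrow> real) \<Rightarrow> bool" where
  "additive_on M v \<longleftrightarrow> (\<forall>S\<subseteq>M. v S = (\<Sum>g\<in>S. v {g}))"

definition nonneg_on :: "nat set \<Rightarrow> (nat set \<Rightarrow> real) \<Rightarrow> bool" where
  "nonneg_on M v \<longleftrightarrow> (\<forall>S\<subseteq>M. v S \<ge> 0)"

definition is_partition :: "nat set \<Rightarrow> nat \<Rightarrow> (nat \<Rightarrow> nat set) \<Rightarrow> bool" where
  "is_partition M n S \<longleftrightarrow> (\<Union>j<n. S j) = M \<and>
     (\<forall>j<n. \<forall>k<n. j \<noteq> k \<longrightarrow> S j \<inter> S k = {})"

definition WMMS :: "nat \<Rightarrow> nat set \<Rightarrow> (nat \<Rightarrow> nat set \<Rightarrow> real) \<Rightarrow> (nat \<Rightarrow> real) \<Rightarrow> nat \<Rightarrow> real" where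
  "WMMS n M v b i = Max {Min {v i (S j) * b i / b j | j. j < n} | S. is_partition M n S}"

definition price_vectors :: "nat set \<Rightarrow> (nat \<Rightarrow> real) set" where
  "price_vectors M = {p. (\<forall>g\<in>M. p g \<ge> 0) \<and> (\<Sum>g\<in>M. p g) = 1}"

text \<open>AnyPrice share of agent i (the minimum over prices is attained; we write it as Inf).\<close>
definition APS :: "nat set \<Rightarrow> (nat \<Rightarrow> nat set \<Rightarrow> real) \<Rightarrow> (nat \<Rightarrow> real) \<Rightarrow> nat \<Rightarrow> real" where
  "APS M v b i = Inf {Max {v i S | S. S \<subseteq> M \<and> (\<Sum>g\<in>S. p g) \<le> b i} | p. p \<in> price_vectors M}"

end

theory Submission
  imports Defs "HOL-Library.FuncSet"
begin

text \<open>Two agents with entitlements 1/4 and 3/4 share two goods, each worth 1 to both of them.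
  At the uniform prices 1/2 the budget 1/4 of the first agent buys nothing, so her AnyPrice
  share is 0. Giving each agent one good, her weighted share is min(1, 1 \<cdot> (1/4)/(3/4)) = 1/3,
  so her weighted maximin share is positive and the ratio is 0.\<close>

lemma partition_value_le_WMMS:
  assumes "finite M" and "is_partition M n S"
  shows "Min {v i (S j) * b i / b j | j. j < n} \<le> WMMS n M v b i"
proof -
  \<comment> \<open>Only the first n bundles enter a value, so there are finitely many candidate values.\<close>
  let ?value = "\<lambda>T. Min {v i (T j) * b i / b j | j. j < n}"
  have "?value T = ?value (restrict T {..<n})" for T
    by (metis (no_types, lifting) lessThan_iff restrict_apply')
  moreover have "restrict S {..<n} \<in> {..<n} \<rightarrow>\<^sub>E Pow M" if "is_partition M n S" for S
    using that by (auto simp: is_partition_def)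
  ultimately have "{?value S | S. is_partition M n S} \<subseteq> ?value ` ({..<n} \<rightarrow>\<^sub>E Pow M)"
    by blast
  then have "finite {?value S | S. is_partition M n S}"
    by (rule finite_subset) (simp add: assms(1) finite_PiE)
  then show ?thesis
    unfolding WMMS_def using assms(2) by (auto intro: Max_ge)
qed

lemma uniform_price_vector:
  assumes "finite M" and "M \<noteq> {}"
  shows "(\<lambda>_. 1 / real (card M)) \<in> price_vectors M"
  using assms by (simp add: price_vectors_def)

lemma APS_eq_0_if_budget_below_uniform_price:
  assumes M: "finite M" "M \<noteq> {}" and additive: "additive_on M (v i)"
    and budget: "0 \<le> b i" "b i < 1 / real (card M)"
  shows "APS M v b i = 0"
proof -
  let ?best = "\<lambda>p. Max {v i S | S. S \<subseteq> M \<and> (\<Sum>g\<in>S. p g) \<le> b i}"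
  have v_empty: "v i {} = 0"
    using additive by (simp add: additive_on_def)
  have best_nonneg: "0 \<le> ?best p" for p
  proof -
    have "finite {v i S | S. S \<subseteq> M \<and> (\<Sum>g\<in>S. p g) \<le> b i}"
      by (rule finite_subset[of _ "v i ` Pow M"]) (use M(1) in auto)
    moreover have "v i {} \<in> {v i S | S. S \<subseteq> M \<and> (\<Sum>g\<in>S. p g) \<le> b i}"
      using budget(1) by auto
    ultimately have "v i {} \<le> ?best p"
      by (rule Max_ge)
    then show ?thesis
      using v_empty by simp
  qed
  have nothing_affordable: "S = {}"
    if "S \<subseteq> M" and "(\<Sum>g\<in>S. 1 / real (card M)) \<le> b i" for S
  proof (rule ccontr)
    assume "S \<noteq> {}"
    then have "1 \<le> card S"
      using finite_subset[OF that(1) M(1)] by (simp add: Suc_le_eq card_gt_0_iff)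
    then have "1 / real (card M) \<le> (\<Sum>g\<in>S. 1 / real (card M))"
      by (simp add: divide_right_mono)
    then show False
      using that(2) budget(2) by linarith
  qed
  have "{v i S | S. S \<subseteq> M \<and> (\<Sum>g\<in>S. 1 / real (card M)) \<le> b i} = {v i {}}"
  proof
    show "{v i S | S. S \<subseteq> M \<and> (\<Sum>g\<in>S. 1 / real (card M)) \<le> b i} \<subseteq> {v i {}}"
      using nothing_affordable by blast
    show "{v i {}} \<subseteq> {v i S | S. S \<subseteq> M \<and> (\<Sum>g\<in>S. 1 / real (card M)) \<le> b i}"
      using budget(1) by auto
  qed
  then have "?best (\<lambda>_. 1 / real (card M)) = 0"
    using v_empty by simp
  then show ?thesis
    unfolding APS_def using best_nonneg uniform_price_vector[OF M]
    by (intro cInf_eq_minimum) force+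
qed

theorem proposition1:
  fixes \<delta> :: real
  assumes "\<delta> > 0"
  shows "\<exists>(n::nat) (M::nat set) (v::nat \<Rightarrow> nat set \<Rightarrow> real) (b::nat \<Rightarrow> real) (i::nat).
           n \<ge> 1 \<and> finite M \<and>
           (\<forall>j<n. additive_on M (v j) \<and> nonneg_on M (v j)) \<and>
           (\<forall>j<n. b j > 0) \<and> (\<Sum>j<n. b j) = 1 \<and>
           i < n \<and> WMMS n M v b i > 0 \<and>
           APS M v b i / WMMS n M v b i < \<delta>"
proof -
  define M :: "nat set" where "M = {0, 1}"
  define v :: "nat \<Rightarrow> nat set \<Rightarrow> real" where "v = (\<lambda>_ S. real (card S))"
  define b :: "nat \<Rightarrow> real" where "b = (\<lambda>j. if j = 0 then 1/4 else 3/4)"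
  have valuations: "additive_on M (v j) \<and> nonneg_on M (v j)" for j
    by (simp add: additive_on_def nonneg_on_def v_def M_def finite_subset)
  have "{v 0 {j} * b 0 / b j | j. j < 2} = {1, 1/3}"
    by (auto simp: v_def b_def less_2_cases_iff)
  then have "Min {v 0 {j} * b 0 / b j | j. j < 2} = 1/3"
    by simp
  moreover have "is_partition M 2 (\<lambda>j. {j})"
    by (auto simp: M_def is_partition_def less_2_cases_iff)
  ultimately have "1/3 \<le> WMMS 2 M v b 0"
    using partition_value_le_WMMS[of M 2 "\<lambda>j. {j}" v 0 b] by (simp add: M_def)
  moreover have "APS M v b 0 = 0"
    using valuations by (intro APS_eq_0_if_budget_below_uniform_price) (simp_all add: M_def b_def)
  ultimately have "0 < WMMS 2 M v b 0" and "APS M v b 0 / WMMS 2 M v b 0 < \<delta>"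
    using assms by simp_all
  moreover have "(\<Sum>j<2. b j) = 1"
    by (simp add: b_def numeral_2_eq_2)
  ultimately show ?thesis
    using valuations by (intro exI[of _ 2] exI[of _ M] exI[of _ v] exI[of _ b] exI[of _ 0])
      (simp add: M_def b_def)
qed

end
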